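(* For every $\alpha>1$, the Ces\`aro operator $C_1(f)(z)=\int_0^z\frac{f(w)}{w(1-w)}\,dw$ is a bounded linear operator from $(\mathcal{B}_\alpha^0,\|\cdot\|_{\mathcal{B}_\alpha})$ to itself.
   Context: $\mathbb{D}=\{z\in\mathbb{C}:|z|<1\}$. For $\alpha>0$, the $\alpha$-Bloch space $\mathcal{B}_\alpha$ is the space of analytic functions $f$ on $\mathbb{D}$ with $\|f\|_{\mathcal{B}_\alpha}:=\sup_{z\in\mathbb{D}}(1-|z|^2)^\alpha|f'(z)|<\infty$. $\mathcal{B}_\alpha^0=\{f\in\mathcal{B}_\alpha: f(0)=0\}$, normed by $\|\cdot\|_{\mathcal{B}_\alpha}$. *)

theory Defs
  imports "HOL-Complex_Analysis.Complex_Analysis"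
begin

definition in_bloch :: "real \<Rightarrow> (complex \<Rightarrow> complex) \<Rightarrow> bool" where
  "in_bloch \<alpha> f \<longleftrightarrow> f holomorphic_on ball 0 1 \<and>
     bdd_above ((\<lambda>z. (1 - (cmod z)\<^sup>2) powr \<alpha> * cmod (deriv f z)) ` ball 0 1)"

definition bloch_norm :: "real \<Rightarrow> (complex \<Rightarrow> complex) \<Rightarrow> real" where
  "bloch_norm \<alpha> f = (SUP z\<in>ball 0 1. (1 - (cmod z)\<^sup>2) powr \<alpha> * cmod (deriv f z))"

definition bloch0 :: "real \<Rightarrow> (complex \<Rightarrow> complex) set" where
  "bloch0 \<alpha> = {f. in_bloch \<alpha> f \<and> f 0 = 0}"

definition cesaro1 :: "(complex \<Rightarrow> complex) \<Rightarrow> complex \<Rightarrow> complex" where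
  "cesaro1 f z = contour_integral (linepath 0 z) (\<lambda>w. f w / (w * (1 - w)))"

end

theory Submission
  imports Defs
begin

(* Away from 0 the derivative of C_1 f is f(z)/(z(1-z)), so it suffices to bound
   (1-|z|^2)^alpha |f(z)| / (|z| |1-z|) by a multiple of the Bloch norm N of f.
   Since f(0) = 0, integrating f' along the radius gives two growth estimates:
   |f(z)| <= N |z| / (1-|z|^2)^alpha, which handles |z| <= 1/2 (there |1-z| >= 1/2),
   and |f(z)| <= N (1-|z|)^(1-alpha) / (alpha-1), which needs alpha > 1 and handles
   |z| >= 1/2 (there |z| |1-z| >= (1-|z|)/2 and (1-|z|^2)^alpha <= 2^alpha (1-|z|)^alpha). *)

lemma bloch0_D:
  assumes "f \<in> bloch0 \<alpha>"
  shows "in_bloch \<alpha> f" "f holomorphic_on ball 0 1" "f 0 = 0"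
  using assms unfolding bloch0_def in_bloch_def by auto

lemma bloch_weighted_deriv_le_norm:
  assumes "in_bloch \<alpha> f" "w \<in> ball 0 1"
  shows "(1 - (cmod w)\<^sup>2) powr \<alpha> * cmod (deriv f w) \<le> bloch_norm \<alpha> f"
  using assms unfolding in_bloch_def bloch_norm_def by (auto intro!: cSUP_upper)

lemma bloch_norm_nonneg:
  assumes "in_bloch \<alpha> f"
  shows "0 \<le> bloch_norm \<alpha> f"
  by (rule order_trans[OF _ bloch_weighted_deriv_le_norm[OF assms, of 0]]) auto

lemma bloch_deriv_le:
  assumes "in_bloch \<alpha> f" "w \<in> ball 0 1"
  shows "cmod (deriv f w) \<le> bloch_norm \<alpha> f / (1 - (cmod w)\<^sup>2) powr \<alpha>"
proof -
  have "(cmod w)\<^sup>2 < 1"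
    using assms(2) by (simp add: abs_square_less_1)
  then show ?thesis
    using bloch_weighted_deriv_le_norm[OF assms] by (simp add: pos_le_divide_eq mult.commute)
qed

lemma bloch0_norm_le_mean_value:
  assumes "f \<in> bloch0 \<alpha>" "z \<in> ball 0 1" "\<alpha> \<ge> 0"
  shows "cmod (f z) \<le> bloch_norm \<alpha> f / (1 - (cmod z)\<^sup>2) powr \<alpha> * cmod z"
proof -
  define r where "r = cmod z"
  have r: "0 \<le> r" "r < 1"
    using assms(2) by (auto simp: r_def)
  have N: "0 \<le> bloch_norm \<alpha> f"
    using bloch_norm_nonneg[OF bloch0_D(1)[OF assms(1)]] .
  have "norm (f z - f 0) \<le> bloch_norm \<alpha> f / (1 - r\<^sup>2) powr \<alpha> * norm (z - 0)"
  proof (rule field_differentiable_bound[of "cball 0 r"])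
    fix w assume "w \<in> cball (0::complex) r"
    then have w: "w \<in> ball 0 1" "(cmod w)\<^sup>2 \<le> r\<^sup>2"
      using r by (auto intro: power_mono)
    show "(f has_field_derivative deriv f w) (at w within cball 0 r)"
      using holomorphic_derivI[OF bloch0_D(2)[OF assms(1)] open_ball w(1)]
      by (rule has_field_derivative_at_within)
    have "r\<^sup>2 < 1"
      using r by (simp add: abs_square_less_1)
    then have "(1 - r\<^sup>2) powr \<alpha> \<le> (1 - (cmod w)\<^sup>2) powr \<alpha>" "0 < (1 - r\<^sup>2) powr \<alpha>"
      using w(2) assms(3) by (auto intro!: powr_mono2)
    then have "bloch_norm \<alpha> f / (1 - (cmod w)\<^sup>2) powr \<alpha> \<le> bloch_norm \<alpha> f / (1 - r\<^sup>2) powr \<alpha>"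
      using N by (intro divide_left_mono mult_pos_pos) auto
    then show "norm (deriv f w) \<le> bloch_norm \<alpha> f / (1 - r\<^sup>2) powr \<alpha>"
      using bloch_deriv_le[OF bloch0_D(1)[OF assms(1)] w(1)] by simp
  qed (use r in \<open>auto simp: r_def\<close>)
  then show ?thesis
    using bloch0_D(3)[OF assms(1)] by (simp add: r_def)
qed

lemma has_real_derivative_powr_one_minus:
  assumes "t < 1" "\<alpha> \<noteq> 1"
  shows "((\<lambda>t. (1 - t) powr (1 - \<alpha>) / (\<alpha> - 1)) has_real_derivative (1 - t) powr (- \<alpha>)) (at t)"
proof -
  have "((\<lambda>t. (1 - t) powr (1 - \<alpha>) / (\<alpha> - 1)) has_real_derivative
          (1 - \<alpha>) * (1 - t) powr (1 - \<alpha> - 1) * (0 - 1) / (\<alpha> - 1)) (at t)"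
    using assms by (intro derivative_eq_intros refl) auto
  moreover have "(1 - \<alpha>) * (1 - t) powr (1 - \<alpha> - 1) * (0 - 1) / (\<alpha> - 1) = (1 - t) powr (- \<alpha>)"
    using assms(2) by (simp add: field_simps)
  ultimately show ?thesis
    by simp
qed

lemma holomorphic_radial_has_vector_derivative:
  assumes "f holomorphic_on S" "open S" "of_real t * u \<in> S"
  shows "((\<lambda>t. f (of_real t * u)) has_vector_derivative u * deriv f (of_real t * u)) (at t)"
proof -
  have "((\<lambda>t::real. of_real t * u) has_vector_derivative u) (at t)"
    by (auto intro!: derivative_eq_intros simp: has_vector_derivative_def scaleR_conv_of_real)
  from field_vector_diff_chain_at[OF this holomorphic_derivI[OF assms]]
  show ?thesis
    by (simp add: o_def)
qed

lemma bloch0_norm_le_growth: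
  assumes "f \<in> bloch0 \<alpha>" "z \<in> ball 0 1" "\<alpha> > 1"
  shows "cmod (f z) \<le> bloch_norm \<alpha> f * (1 - cmod z) powr (1 - \<alpha>) / (\<alpha> - 1)"
proof (cases "z = 0")
  case True
  then show ?thesis
    using bloch0_D(3)[OF assms(1)] bloch_norm_nonneg[OF bloch0_D(1)[OF assms(1)]] assms(3) by simp
next
  case False
  define r where "r = cmod z"
  define N where "N = bloch_norm \<alpha> f"
  define u where "u = z / of_real r"
  define F where "F = (\<lambda>t::real. f (of_real t * u))"
  define \<phi> where "\<phi> = (\<lambda>t::real. N * ((1 - t) powr (1 - \<alpha>) / (\<alpha> - 1)))"
  have r: "0 < r" "r < 1"
    using False assms(2) by (auto simp: r_def)
  have u: "cmod u = 1" "z = of_real r * u"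
    using r by (auto simp: u_def r_def norm_divide)
  have N: "0 \<le> N"
    unfolding N_def using bloch_norm_nonneg[OF bloch0_D(1)[OF assms(1)]] .
  have hol: "f holomorphic_on ball 0 1"
    using bloch0_D(2)[OF assms(1)] .
  have radius: "of_real t * u \<in> ball 0 1" if "0 \<le> t" "t < 1" for t
    using that u(1) by (simp add: norm_mult)
  have "norm (F r - F 0) \<le> \<phi> r - \<phi> 0"
  proof (rule differentiable_bound_general[OF r(1)])
    show "continuous_on {0..r} F"
      unfolding F_def using radius r(2)
      by (intro continuous_on_compose2[OF holomorphic_on_imp_continuous_on[OF hol]])
         (auto intro!: continuous_intros)
    show "continuous_on {0..r} \<phi>"
      unfolding \<phi>_def using r(2) assms(3) by (auto intro!: continuous_intros)
    fix t assume t: "0 < t" "t < r"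
    then have tu: "of_real t * u \<in> ball 0 1"
      using radius r(2) by simp
    show "(F has_vector_derivative u * deriv f (of_real t * u)) (at t)"
      unfolding F_def by (rule holomorphic_radial_has_vector_derivative[OF hol open_ball tu])
    show "(\<phi> has_vector_derivative N * (1 - t) powr (- \<alpha>)) (at t)"
      unfolding \<phi>_def has_real_derivative_iff_has_vector_derivative[symmetric]
      using t r(2) assms(3)
      by (intro DERIV_cmult has_real_derivative_powr_one_minus) auto
    have "1 - t \<le> 1 - t\<^sup>2" "0 < 1 - t"
      using t r by (auto simp: power2_eq_square mult_le_cancel_right1)
    then have "(1 - t) powr \<alpha> \<le> (1 - t\<^sup>2) powr \<alpha>" "0 < (1 - t) powr \<alpha>"
      using assms(3) by (auto intro!: powr_mono2)
    then have "N / (1 - t\<^sup>2) powr \<alpha> \<le> N / (1 - t) powr \<alpha>"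
      using N by (intro divide_left_mono mult_pos_pos) auto
    also have "\<dots> = N * (1 - t) powr (- \<alpha>)"
      by (simp add: powr_minus divide_inverse)
    finally have "N / (1 - t\<^sup>2) powr \<alpha> \<le> N * (1 - t) powr (- \<alpha>)" .
    then show "norm (u * deriv f (of_real t * u)) \<le> N * (1 - t) powr (- \<alpha>)"
      using bloch_deriv_le[OF bloch0_D(1)[OF assms(1)] tu] t u(1)
      by (simp add: N_def norm_mult)
  qed
  moreover have "F r = f z" "F 0 = 0"
    using u(2) bloch0_D(3)[OF assms(1)] by (auto simp: F_def)
  moreover have "0 \<le> \<phi> 0"
    using N assms(3) by (simp add: \<phi>_def)
  ultimately show ?thesis
    by (simp add: \<phi>_def N_def r_def)
qed

lemma cesaro1_primitive:
  assumes "f holomorphic_on ball 0 1" "f 0 = 0"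
  obtains G where
    "\<And>z. z \<in> ball 0 1 \<Longrightarrow>
       (G has_field_derivative (if z = 0 then deriv f 0 else f z / (z * (1 - z)))) (at z)"
    "\<And>z. z \<in> ball 0 1 \<Longrightarrow>
       ((\<lambda>w. f w / (w * (1 - w))) has_contour_integral G z - G 0) (linepath 0 z)"
proof -
  define g where "g = (\<lambda>z. if z = 0 then deriv f 0 else f z / (z * (1 - z)))"
  have "(\<lambda>z. if z = 0 then deriv f 0 else (f z - f 0) / (z - 0)) holomorphic_on ball 0 1"
    using pole_lemma[OF assms(1), of 0] by (simp add: interior_open)
  then have "(\<lambda>z. (if z = 0 then deriv f 0 else (f z - f 0) / (z - 0)) / (1 - z)) holomorphic_on ball 0 1"
    by (intro holomorphic_intros) (auto simp: dist_norm)
  also have "(\<lambda>z. (if z = 0 then deriv f 0 else (f z - f 0) / (z - 0)) / (1 - z)) = g"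
    using assms(2) by (auto simp: g_def)
  finally obtain G where G: "\<And>z. z \<in> ball 0 1 \<Longrightarrow> (G has_field_derivative g z) (at z within ball 0 1)"
    using holomorphic_convex_primitive'[OF convex_ball open_ball] by blast
  show ?thesis
  proof
    fix z :: complex assume z: "z \<in> ball 0 1"
    show "(G has_field_derivative (if z = 0 then deriv f 0 else f z / (z * (1 - z)))) (at z)"
      using G[OF z] by (simp add: g_def at_within_open[OF z open_ball])
    have "path_image (linepath 0 z) \<subseteq> ball 0 1"
      unfolding path_image_linepath using z by (intro closed_segment_subset) auto
    from contour_integral_primitive[OF G valid_path_linepath this]
    have "(g has_contour_integral G z - G 0) (linepath 0 z)"
      by simp
    then show "((\<lambda>w. f w / (w * (1 - w))) has_contour_integral G z - G 0) (linepath 0 z)"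
      unfolding has_contour_integral_linepath
      by (rule has_integral_spike_finite[where S = "{0}", rotated 2])
         (auto simp: g_def linepath_def scaleR_conv_of_real)
  qed
qed

lemma
  assumes "f holomorphic_on ball 0 1" "f 0 = 0" "z \<in> ball 0 1"
  shows cesaro1_has_contour_integral:
      "((\<lambda>w. f w / (w * (1 - w))) has_contour_integral cesaro1 f z) (linepath 0 z)"
    and cesaro1_has_field_derivative:
      "(cesaro1 f has_field_derivative (if z = 0 then deriv f 0 else f z / (z * (1 - z)))) (at z)"
proof -
  obtain G where
    G': "\<And>z. z \<in> ball 0 1 \<Longrightarrow>
       (G has_field_derivative (if z = 0 then deriv f 0 else f z / (z * (1 - z)))) (at z)" and
    G: "\<And>z. z \<in> ball 0 1 \<Longrightarrow>
       ((\<lambda>w. f w / (w * (1 - w))) has_contour_integral G z - G 0) (linepath 0 z)"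
    using cesaro1_primitive[OF assms(1,2)] by blast
  have cesaro1_eq: "cesaro1 f w = G w - G 0" if "w \<in> ball 0 1" for w
    unfolding cesaro1_def using G[OF that] by (rule contour_integral_unique)
  show "((\<lambda>w. f w / (w * (1 - w))) has_contour_integral cesaro1 f z) (linepath 0 z)"
    using G[OF assms(3)] cesaro1_eq[OF assms(3)] by simp
  show "(cesaro1 f has_field_derivative (if z = 0 then deriv f 0 else f z / (z * (1 - z)))) (at z)"
  proof (rule has_field_derivative_transform_within_open[OF _ open_ball assms(3)])
    show "((\<lambda>w. G w - G 0) has_field_derivative
            (if z = 0 then deriv f 0 else f z / (z * (1 - z)))) (at z)"
      using DERIV_diff[OF G'[OF assms(3)] DERIV_const[of "G 0"]] by simp
    show "G w - G 0 = cesaro1 f w" if "w \<in> ball 0 1" for w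
      using cesaro1_eq[OF that] by simp
  qed
qed

lemma cesaro1_weighted_deriv_le_inner:
  assumes "f \<in> bloch0 \<alpha>" "\<alpha> > 1" "z \<noteq> 0" "cmod z \<le> 1/2"
  shows "(1 - (cmod z)\<^sup>2) powr \<alpha> * (cmod (f z) / (cmod z * cmod (1 - z))) \<le> 2 * bloch_norm \<alpha> f"
proof -
  define A where "A = (1 - (cmod z)\<^sup>2) powr \<alpha>"
  have z: "z \<in> ball 0 1" "0 < cmod z"
    using assms(3,4) by auto
  have N: "0 \<le> bloch_norm \<alpha> f"
    using bloch_norm_nonneg[OF bloch0_D(1)[OF assms(1)]] .
  have "(cmod z)\<^sup>2 < 1"
    using z(1) by (simp add: abs_square_less_1)
  then have "0 < A"
    by (simp add: A_def)
  then have Af: "A * cmod (f z) \<le> bloch_norm \<alpha> f * cmod z"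
    using bloch0_norm_le_mean_value[OF assms(1) z(1)] assms(2)
    by (simp add: A_def field_simps)
  have one_minus_z: "1/2 \<le> cmod (1 - z)"
    using norm_triangle_ineq2[of 1 z] assms(4) by simp
  have "A * (cmod (f z) / (cmod z * cmod (1 - z))) = A * cmod (f z) / cmod z / cmod (1 - z)"
    by simp
  also have "\<dots> \<le> bloch_norm \<alpha> f * cmod z / cmod z / cmod (1 - z)"
    using Af one_minus_z by (intro divide_right_mono) auto
  also have "\<dots> = bloch_norm \<alpha> f / cmod (1 - z)"
    using z(2) by simp
  also have "\<dots> \<le> bloch_norm \<alpha> f / (1/2)"
    using N one_minus_z by (intro divide_left_mono) auto
  finally show ?thesis
    by (simp add: A_def)
qed

lemma cesaro1_weighted_deriv_le_outer:
  assumes "f \<in> bloch0 \<alpha>" "\<alpha> > 1" "z \<in> ball 0 1" "1/2 \<le> cmod z"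
  shows "(1 - (cmod z)\<^sup>2) powr \<alpha> * (cmod (f z) / (cmod z * cmod (1 - z)))
          \<le> 2 * 2 powr \<alpha> / (\<alpha> - 1) * bloch_norm \<alpha> f"
proof -
  define r where "r = cmod z"
  define N where "N = bloch_norm \<alpha> f"
  have r: "1/2 \<le> r" "r < 1"
    using assms(3,4) by (auto simp: r_def)
  have N: "0 \<le> N"
    unfolding N_def using bloch_norm_nonneg[OF bloch0_D(1)[OF assms(1)]] .
  have "r\<^sup>2 < 1"
    using r by (simp add: abs_square_less_1)
  moreover have "1 - r\<^sup>2 \<le> 2 * (1 - r)"
    using zero_le_power2[of "1 - r"] by (simp add: power2_eq_square algebra_simps)
  ultimately have "(1 - r\<^sup>2) powr \<alpha> \<le> (2 * (1 - r)) powr \<alpha>"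
    using assms(2) by (intro powr_mono2) auto
  also have "\<dots> = 2 powr \<alpha> * (1 - r) powr \<alpha>"
    using r by (subst powr_mult) auto
  finally have weight: "(1 - r\<^sup>2) powr \<alpha> \<le> 2 powr \<alpha> * (1 - r) powr \<alpha>" .
  have growth: "cmod (f z) \<le> N * (1 - r) powr (1 - \<alpha>) / (\<alpha> - 1)"
    using bloch0_norm_le_growth[OF assms(1,3,2)] by (simp add: N_def r_def)
  have "(1 - r\<^sup>2) powr \<alpha> * cmod (f z)
          \<le> (2 powr \<alpha> * (1 - r) powr \<alpha>) * (N * (1 - r) powr (1 - \<alpha>) / (\<alpha> - 1))"
    using weight growth by (intro mult_mono) auto
  also have "\<dots> = 2 powr \<alpha> * N / (\<alpha> - 1) * ((1 - r) powr \<alpha> * (1 - r) powr (1 - \<alpha>))"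
    by simp
  also have "(1 - r) powr \<alpha> * (1 - r) powr (1 - \<alpha>) = 1 - r"
    using r by (simp add: powr_add[symmetric])
  finally have numerator: "(1 - r\<^sup>2) powr \<alpha> * cmod (f z) \<le> 2 powr \<alpha> * N / (\<alpha> - 1) * (1 - r)" .
  have "(1 - r) / 2 \<le> r * (1 - r)"
    using mult_right_mono[OF r(1), of "1 - r"] r(2) by simp
  also have "\<dots> \<le> r * cmod (1 - z)"
    using norm_triangle_ineq2[of 1 z] r by (intro mult_left_mono) (auto simp: r_def)
  finally have denominator: "(1 - r) / 2 \<le> r * cmod (1 - z)" .
  have "(1 - r\<^sup>2) powr \<alpha> * (cmod (f z) / (r * cmod (1 - z)))
          = (1 - r\<^sup>2) powr \<alpha> * cmod (f z) / (r * cmod (1 - z))"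
    by simp
  also have "\<dots> \<le> (2 powr \<alpha> * N / (\<alpha> - 1) * (1 - r)) / ((1 - r) / 2)"
    using numerator denominator r N assms(2) by (intro frac_le) auto
  also have "\<dots> = 2 * 2 powr \<alpha> / (\<alpha> - 1) * N"
    using r by simp
  finally show ?thesis
    by (simp add: r_def N_def)
qed

lemma cesaro1_weighted_deriv_le:
  assumes "f \<in> bloch0 \<alpha>" "\<alpha> > 1" "z \<in> ball 0 1"
  shows "(1 - (cmod z)\<^sup>2) powr \<alpha> * cmod (deriv (cesaro1 f) z)
          \<le> (2 + 2 * 2 powr \<alpha> / (\<alpha> - 1)) * bloch_norm \<alpha> f"
proof -
  have N: "0 \<le> bloch_norm \<alpha> f"
    using bloch_norm_nonneg[OF bloch0_D(1)[OF assms(1)]] .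
  have C: "0 \<le> 2 * 2 powr \<alpha> / (\<alpha> - 1) * bloch_norm \<alpha> f"
    using N assms(2) by simp
  have split_bound: "(2 + 2 * 2 powr \<alpha> / (\<alpha> - 1)) * bloch_norm \<alpha> f
      = 2 * bloch_norm \<alpha> f + 2 * 2 powr \<alpha> / (\<alpha> - 1) * bloch_norm \<alpha> f"
    by (simp add: distrib_right)
  have deriv_eq: "deriv (cesaro1 f) z = (if z = 0 then deriv f 0 else f z / (z * (1 - z)))"
    using cesaro1_has_field_derivative[OF bloch0_D(2,3)[OF assms(1)] assms(3)]
    by (rule DERIV_imp_deriv)
  consider "z = 0" | "z \<noteq> 0" "cmod z \<le> 1/2" | "1/2 \<le> cmod z"
    by linarith
  then show ?thesis
  proof cases
    case 1
    then show ?thesis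
      using bloch_weighted_deriv_le_norm[OF bloch0_D(1)[OF assms(1)], of 0] deriv_eq N C split_bound
      by simp
  next
    case 2
    then show ?thesis
      using cesaro1_weighted_deriv_le_inner[OF assms(1,2) 2] deriv_eq C split_bound
      by (simp add: norm_divide norm_mult)
  next
    case 3
    then have "z \<noteq> 0"
      by auto
    then show ?thesis
      using cesaro1_weighted_deriv_le_outer[OF assms(1,2,3) 3] deriv_eq N split_bound
      by (simp add: norm_divide norm_mult)
  qed
qed

theorem corollary2p1:
  fixes \<alpha> :: real
  assumes "\<alpha> > 1"
  shows "(\<forall>f\<in>bloch0 \<alpha>. cesaro1 f \<in> bloch0 \<alpha>)
    \<and> (\<forall>f\<in>bloch0 \<alpha>. \<forall>g\<in>bloch0 \<alpha>. \<forall>c::complex. \<forall>z\<in>ball 0 1.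
          cesaro1 (\<lambda>w. c * f w + g w) z = c * cesaro1 f z + cesaro1 g z)
    \<and> (\<exists>M. \<forall>f\<in>bloch0 \<alpha>. bloch_norm \<alpha> (cesaro1 f) \<le> M * bloch_norm \<alpha> f)"
proof (intro conjI ballI allI exI)
  fix f assume f: "f \<in> bloch0 \<alpha>"
  have "cesaro1 f holomorphic_on ball 0 1"
    unfolding holomorphic_on_open[OF open_ball]
    using cesaro1_has_field_derivative[OF bloch0_D(2,3)[OF f]] by blast
  moreover have "bdd_above ((\<lambda>z. (1 - (cmod z)\<^sup>2) powr \<alpha> * cmod (deriv (cesaro1 f) z)) ` ball 0 1)"
    using cesaro1_weighted_deriv_le[OF f assms] by (intro bdd_aboveI2) auto
  ultimately show "cesaro1 f \<in> bloch0 \<alpha>"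
    by (simp add: bloch0_def in_bloch_def cesaro1_def)
  show "bloch_norm \<alpha> (cesaro1 f) \<le> (2 + 2 * 2 powr \<alpha> / (\<alpha> - 1)) * bloch_norm \<alpha> f"
    unfolding bloch_norm_def[of _ "cesaro1 f"]
    using cesaro1_weighted_deriv_le[OF f assms] by (intro cSUP_least) auto
next
  fix f g c z assume f: "f \<in> bloch0 \<alpha>" and g: "g \<in> bloch0 \<alpha>" and z: "z \<in> ball (0::complex) 1"
  have "((\<lambda>w. (c * f w + g w) / (w * (1 - w))) has_contour_integral c * cesaro1 f z + cesaro1 g z)
          (linepath 0 z)"
    using has_contour_integral_add[OF has_contour_integral_lmul
            [OF cesaro1_has_contour_integral[OF bloch0_D(2,3)[OF f] z]]
            cesaro1_has_contour_integral[OF bloch0_D(2,3)[OF g] z]]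
    by (simp add: add_divide_distrib)
  then show "cesaro1 (\<lambda>w. c * f w + g w) z = c * cesaro1 f z + cesaro1 g z"
    unfolding cesaro1_def by (rule contour_integral_unique)
qed

end
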